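(* For every integer $n\ge 3$, the element $P_n$ lies in $\mathbb{Q}[x_1,\dots,x_n]$ and is an irreducible polynomial over $\mathbb{Q}$.
   Context: Let $n\ge 1$ and let $x_1,\dots,x_n$ be algebraically independent indeterminates over $\mathbb{Q}$. In a fixed algebraic closure of $\mathbb{Q}(x_1,\dots,x_n)$ fix elements $y_1,\dots,y_n$ with $y_i^2=1-x_i^2$. For indices $i_1<\dots<i_m$ define $\mathrm{EC}_m(x_{i_1},\dots,x_{i_m})=\sum_{S\subseteq\{i_1,\dots,i_m\},\ |S|\text{ even}}(-1)^{|S|/2}\prod_{j\in S}y_j\prod_{j\notin S}x_j$ (the formal expansion of $\cos(\theta_{i_1}+\dots+\theta_{i_m})$ with $x_j=\cos\theta_j$, $y_j=\sin\theta_j$); write $\mathrm{EC}_m=\mathrm{EC}_m(x_1,\dots,x_m)$. For $n\ge 2$ let $G_{n-1}$ denote the Galois group of $\mathbb{Q}(x_1,\dots,x_n,\ y_iy_j:1\le i<j\le n-1)$ over $\mathbb{Q}(x_1,\dots,x_n)$ (trivial for $n=2$). Define $P_1=x_1-1$ and, for $n\ge 2$, $P_n=\prod_{\sigma\in G_{n-1}}\bigl(x_n-\sigma(\mathrm{EC}_{n-1}(x_1,\dots,x_{n-1}))\bigr)$; thus $P_2=x_2-x_1$ and $P_3=x_1^2+x_2^2+x_3^2-2x_1x_2x_3-1$. *)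

theory Defs
  imports Complex_Main "HOL-Library.Poly_Mapping" "HOL-Computational_Algebra.Factorial_Ring"
begin

text \<open>Multivariate polynomials over the rationals in countably many variables
  indexed by nat: a polynomial is a finitely supported map from monomials
  (finitely supported exponent vectors nat =>0 nat) to coefficients.\<close>

type_synonym mpoly = "(nat \<Rightarrow>\<^sub>0 nat) \<Rightarrow>\<^sub>0 rat"

definition var :: "nat \<Rightarrow> mpoly" where
  "var i = Poly_Mapping.single (Poly_Mapping.single i 1) 1"

text \<open>For a fixed n: the variable x_i is var i (1 <= i <= n),
  and the symbol y_i is var (n + i) (1 <= i <= n - 1).\<close>

definition X :: "nat \<Rightarrow> mpoly" where
  "X i = var i"

definition Y :: "nat \<Rightarrow> nat \<Rightarrow> mpoly" where
  "Y n i = var (n + i)"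

text \<open>Formal expansion of cos(theta_1 + ... + theta_m), with the sines given by ys.\<close>

definition EC :: "(nat \<Rightarrow> mpoly) \<Rightarrow> nat \<Rightarrow> mpoly" where
  "EC ys m = (\<Sum>S \<in> {S \<in> Pow {1..m}. even (card S)}.
      (-1) ^ (card S div 2) * (\<Prod>j\<in>S. ys j) * (\<Prod>j\<in>{1..m} - S. X j))"

text \<open>The automorphisms in G_(n-1) of Q(x_1..x_n, y_i y_j : i<j<=n-1) over
  Q(x_1..x_n) are given by sign changes of the y_j (modulo a global sign);
  they are indexed by the set T of flipped indices, T a subset of {2..n-1}.\<close>

definition sigma_y :: "nat \<Rightarrow> nat set \<Rightarrow> nat \<Rightarrow> mpoly" where
  "sigma_y n T j = (if j \<in> T then - Y n j else Y n j)"

text \<open>A polynomial in x and y representing P_n (for n >= 2).\<close>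

definition P_lift :: "nat \<Rightarrow> mpoly" where
  "P_lift n = (\<Prod>T \<in> Pow {2..n-1}. (X n - EC (sigma_y n T) (n - 1)))"

definition in_Qx :: "nat \<Rightarrow> mpoly \<Rightarrow> bool" where
  "in_Qx n p \<longleftrightarrow> (\<forall>m \<in> Poly_Mapping.keys p. Poly_Mapping.keys m \<subseteq> {1..n})"

text \<open>Congruence modulo the ideal generated by y_i^2 - (1 - x_i^2), 1 <= i <= n-1,
  i.e. equality of the images in the algebraic closure.\<close>

definition cong_y :: "nat \<Rightarrow> mpoly \<Rightarrow> mpoly \<Rightarrow> bool" where
  "cong_y n a b \<longleftrightarrow> (\<exists>c :: nat \<Rightarrow> mpoly.
      a - b = (\<Sum>i\<in>{1..n-1}. c i * (Y n i ^ 2 - (1 - X i ^ 2))))"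

end

theory Submission
  imports Defs "Jordan_Normal_Form.Char_Poly"
begin

text \<open>Reducing \<open>P_lift n\<close> modulo \<open>y\<^sub>i\<^sup>2 = 1 - x\<^sub>i\<^sup>2\<close> and then averaging over the sign changes
  \<open>y\<^sub>i \<mapsto> -y\<^sub>i\<close>, which only permute the factors of \<open>P_lift n\<close>, gives a congruent polynomial \<open>p\<close>
  in \<open>x\<^sub>1, \<dots>, x\<^sub>n\<close> alone. Evaluating at complex points where the relations hold shows that \<open>p\<close>,
  as a polynomial in \<open>x\<^sub>n\<close>, is monic of degree \<open>2\<^sup>n\<^sup>-\<^sup>2\<close>.

  For irreducibility substitute \<open>x\<^sub>j = (w\<^sub>j + w\<^sub>j\<^sup>-\<^sup>1)/2\<close> for \<open>j < n\<close> and
  \<open>x\<^sub>n = (w\<^sub>1\<cdots>w\<^sub>n\<^sub>-\<^sub>1 + (w\<^sub>1\<cdots>w\<^sub>n\<^sub>-\<^sub>1)\<^sup>-\<^sup>1)/2\<close>, Laurent polynomials over \<open>\<complex>\<close>;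
  this kills \<open>p\<close>. The automorphisms \<open>w\<^sub>j \<mapsto> w\<^sub>j\<^sup>-\<^sup>1\<close> (\<open>2 \<le> j < n\<close>) produce \<open>2\<^sup>n\<^sup>-\<^sup>2\<close>
  distinct roots in \<open>x\<^sub>n\<close> of every factor of \<open>p\<close> that is killed as well. So in a factorisation
  \<open>p = a b\<close> one factor has full degree in \<open>x\<^sub>n\<close>, and the other one is a unit.\<close>

section \<open>Evaluation of polynomials given as poly-mappings\<close>

lemma poly_mapping_eq_sum_single:
  "(p::'a \<Rightarrow>\<^sub>0 'b::comm_monoid_add) = (\<Sum>k\<in>Poly_Mapping.keys p. Poly_Mapping.single k (Poly_Mapping.lookup p k))"
  by (rule poly_mapping_eqI) (auto simp: lookup_sum lookup_single when_def in_keys_iff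
        sum.delta'[OF finite_keys] split: if_splits)

lemma poly_mapping_induct [case_names zero single add]:
  fixes P :: "('a \<Rightarrow>\<^sub>0 'b::comm_monoid_add) \<Rightarrow> bool"
  assumes "P 0" "\<And>k c. P (Poly_Mapping.single k c)" "\<And>p q. P p \<Longrightarrow> P q \<Longrightarrow> P (p + q)"
  shows "P p"
proof -
  have "P (\<Sum>k\<in>K. Poly_Mapping.single k (Poly_Mapping.lookup p k))" if "finite K" for K
    using that by (induction K rule: finite_induct) (auto simp: assms)
  then show ?thesis by (subst poly_mapping_eq_sum_single) simp
qed

lemma sum_closed:
  assumes "Q 0" "\<And>a b. Q a \<Longrightarrow> Q b \<Longrightarrow> Q (a + b)" "\<And>x. x \<in> S \<Longrightarrow> Q (g x)"
  shows "Q (sum g S)"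
  using assms(3) by (induction S rule: infinite_finite_induct) (auto simp: assms(1,2))

lemma prod_closed:
  assumes "Q 1" "\<And>a b. Q a \<Longrightarrow> Q b \<Longrightarrow> Q (a * b)" "\<And>x. x \<in> S \<Longrightarrow> Q (g x)"
  shows "Q (prod g S)"
  using assms(3) by (induction S rule: infinite_finite_induct) (auto simp: assms(1,2))

lemma power_closed:
  assumes "Q 1" "\<And>a b. Q a \<Longrightarrow> Q b \<Longrightarrow> Q (a * b)" "Q x"
  shows "Q (x ^ k)"
  by (induction k) (auto simp: assms)

definition lin_ext :: "('b::zero \<Rightarrow> 'c::comm_semiring_1) \<Rightarrow> ('a \<Rightarrow> 'c) \<Rightarrow> ('a \<Rightarrow>\<^sub>0 'b) \<Rightarrow> 'c" where
  "lin_ext h g p = (\<Sum>k\<in>Poly_Mapping.keys p. h (Poly_Mapping.lookup p k) * g k)"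

lemma lin_ext_superset:
  assumes "h 0 = 0" "finite S" "Poly_Mapping.keys p \<subseteq> S"
  shows "lin_ext h g p = (\<Sum>k\<in>S. h (Poly_Mapping.lookup p k) * g k)"
  unfolding lin_ext_def using assms by (intro sum.mono_neutral_left) (auto simp: in_keys_iff)

lemma lin_ext_0 [simp]: "lin_ext h g 0 = 0"
  by (simp add: lin_ext_def)

lemma lin_ext_single: "h 0 = 0 \<Longrightarrow> lin_ext h g (Poly_Mapping.single k c) = h c * g k"
  by (auto simp: lin_ext_def)

lemma lin_ext_add:
  assumes "h 0 = 0" "\<And>a b. h (a + b) = h a + h b"
  shows "lin_ext h g (p + q) = lin_ext h g p + lin_ext h g q"
proof -
  let ?S = "Poly_Mapping.keys p \<union> Poly_Mapping.keys q"
  have "lin_ext h g (p + q) = (\<Sum>k\<in>?S. h (Poly_Mapping.lookup (p + q) k) * g k)"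
    using keys_add[of p q] by (intro lin_ext_superset assms) auto
  also have "\<dots> = (\<Sum>k\<in>?S. h (Poly_Mapping.lookup p k) * g k) + (\<Sum>k\<in>?S. h (Poly_Mapping.lookup q k) * g k)"
    by (simp add: lookup_add assms(2) distrib_right sum.distrib)
  also have "\<dots> = lin_ext h g p + lin_ext h g q"
    using lin_ext_superset[of h ?S p g, OF assms(1)] lin_ext_superset[of h ?S q g, OF assms(1)] by auto
  finally show ?thesis .
qed

lemma lin_ext_mult:
  fixes h :: "'b::comm_semiring_1 \<Rightarrow> 'c::comm_semiring_1" and g :: "'a::comm_monoid_add \<Rightarrow> 'c"
  assumes h0: "h 0 = 0" and h_add: "\<And>a b. h (a + b) = h a + h b"
    and h_mult: "\<And>a b. h (a * b) = h a * h b" and g_add: "\<And>k l. g (k + l) = g k * g l"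
  shows "lin_ext h g (p * q) = lin_ext h g p * lin_ext h g q"
proof (induction p rule: poly_mapping_induct)
  case (single k c)
  show ?case
  proof (induction q rule: poly_mapping_induct)
    case (single l d)
    then show ?case by (simp add: mult_single lin_ext_single h0 h_mult g_add ac_simps)
  next
    case (add q1 q2)
    then show ?case by (simp add: distrib_left lin_ext_add h0 h_add)
  qed simp
next
  case (add p1 p2)
  then show ?case by (simp add: distrib_right lin_ext_add h0 h_add)
qed simp

definition monom_eval :: "('v \<Rightarrow> 'c::comm_semiring_1) \<Rightarrow> ('v \<Rightarrow>\<^sub>0 nat) \<Rightarrow> 'c" where
  "monom_eval f m = (\<Prod>i\<in>Poly_Mapping.keys m. f i ^ Poly_Mapping.lookup m i)"

lemma monom_eval_superset:
  assumes "finite S" "Poly_Mapping.keys m \<subseteq> S"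
  shows "monom_eval f m = (\<Prod>i\<in>S. f i ^ Poly_Mapping.lookup m i)"
  unfolding monom_eval_def using assms by (intro prod.mono_neutral_left) (auto simp: in_keys_iff)

lemma monom_eval_0 [simp]: "monom_eval f 0 = 1"
  by (simp add: monom_eval_def)

lemma monom_eval_single [simp]: "monom_eval f (Poly_Mapping.single i k) = f i ^ k"
  by (simp add: monom_eval_def)

lemma monom_eval_add: "monom_eval f (m + m') = monom_eval f m * monom_eval f m'"
proof -
  let ?S = "Poly_Mapping.keys m \<union> Poly_Mapping.keys m'"
  have "monom_eval f (m + m') = (\<Prod>i\<in>?S. f i ^ Poly_Mapping.lookup (m + m') i)"
    using keys_add[of m m'] by (intro monom_eval_superset) auto
  also have "\<dots> = (\<Prod>i\<in>?S. f i ^ Poly_Mapping.lookup m i) * (\<Prod>i\<in>?S. f i ^ Poly_Mapping.lookup m' i)"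
    by (simp add: lookup_add power_add prod.distrib)
  also have "\<dots> = monom_eval f m * monom_eval f m'"
    by (subst (1 2) monom_eval_superset) auto
  finally show ?thesis .
qed

lemma monom_eval_mult: "monom_eval (\<lambda>k. s k * g k) m = monom_eval s m * monom_eval g m"
  unfolding monom_eval_def by (simp add: power_mult_distrib prod.distrib)

lemma monom_eval_if_eq: "monom_eval (\<lambda>k. if k = j then a else 1) m = a ^ Poly_Mapping.lookup m j"
proof -
  have "monom_eval (\<lambda>k. if k = j then a else 1) m =
      (\<Prod>k\<in>insert j (Poly_Mapping.keys m). (if k = j then a else 1) ^ Poly_Mapping.lookup m k)"
    by (rule monom_eval_superset) auto
  also have "\<dots> = (\<Prod>k\<in>insert j (Poly_Mapping.keys m). if k = j then a ^ Poly_Mapping.lookup m j else 1)"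
    by (rule prod.cong) auto
  also have "\<dots> = a ^ Poly_Mapping.lookup m j" by (simp add: prod.delta)
  finally show ?thesis .
qed

definition insertion ::
    "('a::comm_ring_1 \<Rightarrow> 'c::comm_ring_1) \<Rightarrow> ('v \<Rightarrow> 'c) \<Rightarrow> (('v \<Rightarrow>\<^sub>0 nat) \<Rightarrow>\<^sub>0 'a) \<Rightarrow> 'c" where
  "insertion h f = lin_ext h (monom_eval f)"

lemma comm_ring_hom_insertion:
  assumes "comm_ring_hom h"
  shows "comm_ring_hom (insertion h f)"
proof -
  interpret h: comm_ring_hom h by fact
  show ?thesis
  proof
    fix p q
    show "insertion h f (p + q) = insertion h f p + insertion h f q"
      unfolding insertion_def by (rule lin_ext_add) (simp_all add: h.hom_add)
    show "insertion h f (p * q) = insertion h f p * insertion h f q"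
      unfolding insertion_def by (rule lin_ext_mult) (simp_all add: h.hom_add h.hom_mult monom_eval_add)
    show "insertion h f 0 = 0" by (simp add: insertion_def)
    show "insertion h f 1 = 1" by (simp add: insertion_def lin_ext_single flip: single_one)
  qed
qed

lemma insertion_0 [simp]: "insertion h f 0 = 0"
  by (simp add: insertion_def)

lemma insertion_single:
  assumes "comm_ring_hom h"
  shows "insertion h f (Poly_Mapping.single m c) = h c * monom_eval f m"
proof -
  interpret comm_ring_hom h by fact
  show ?thesis by (simp add: insertion_def lin_ext_single)
qed

lemma insertion_var [simp]:
  assumes "comm_ring_hom h"
  shows "insertion h f (var i) = f i"
proof -
  interpret comm_ring_hom h by fact
  show ?thesis by (simp add: var_def insertion_single[OF assms])
qed

lemma insertion_const [simp]: "comm_ring_hom h \<Longrightarrow> insertion h f (Poly_Mapping.single 0 c) = h c"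
  by (simp add: insertion_single)

lemma hom_insertion:
  assumes "comm_ring_hom g"
  shows "g (insertion h f p) = insertion (g \<circ> h) (g \<circ> f) p"
proof -
  interpret g: comm_ring_hom g by fact
  show ?thesis
    by (simp add: insertion_def lin_ext_def monom_eval_def g.hom_sum g.hom_mult g.hom_prod g.hom_power)
qed

lemma insertion_cong:
  assumes "\<And>m i. m \<in> Poly_Mapping.keys p \<Longrightarrow> i \<in> Poly_Mapping.keys m \<Longrightarrow> f i = f' i"
  shows "insertion h f p = insertion h f' p"
  unfolding insertion_def lin_ext_def monom_eval_def using assms
  by (intro sum.cong refl arg_cong2[where f="(*)"] prod.cong) auto

lemma insertion_closed:
  assumes Q0: "Q 0" and Q1: "Q 1" and Q_add: "\<And>a b. Q a \<Longrightarrow> Q b \<Longrightarrow> Q (a + b)"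
    and Q_mult: "\<And>a b. Q a \<Longrightarrow> Q b \<Longrightarrow> Q (a * b)"
    and Q_h: "\<And>c. Q (h c)" and Q_f: "\<And>m i. m \<in> Poly_Mapping.keys p \<Longrightarrow> i \<in> Poly_Mapping.keys m \<Longrightarrow> Q (f i)"
  shows "Q (insertion h f p)"
  unfolding insertion_def lin_ext_def monom_eval_def
proof (rule sum_closed[where Q=Q, OF Q0 Q_add])
  fix m assume m: "m \<in> Poly_Mapping.keys p"
  have "Q (\<Prod>i\<in>Poly_Mapping.keys m. f i ^ Poly_Mapping.lookup m i)"
  proof (rule prod_closed[where Q=Q, OF Q1 Q_mult])
    fix i assume "i \<in> Poly_Mapping.keys m"
    then show "Q (f i ^ Poly_Mapping.lookup m i)"
      using power_closed[where Q=Q, OF Q1 Q_mult Q_f[OF m]] by blast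
  qed
  then show "Q (h (Poly_Mapping.lookup p m) * (\<Prod>i\<in>Poly_Mapping.keys m. f i ^ Poly_Mapping.lookup m i))"
    by (rule Q_mult[OF Q_h])
qed

lemma comm_ring_hom_comp: "comm_ring_hom f \<Longrightarrow> comm_ring_hom g \<Longrightarrow> comm_ring_hom (g \<circ> f)"
proof -
  assume "comm_ring_hom f" "comm_ring_hom g"
  then interpret f: comm_ring_hom f + g: comm_ring_hom g .
  show ?thesis by unfold_locales (simp_all add: f.hom_add g.hom_add f.hom_mult g.hom_mult)
qed

lemma comm_ring_hom_map_poly: "comm_ring_hom h \<Longrightarrow> comm_ring_hom (map_poly h)"
proof -
  assume "comm_ring_hom h"
  then interpret map_poly_comm_ring_hom h by (simp add: map_poly_comm_ring_hom_def)
  show ?thesis by unfold_locales (simp_all add: hom_add hom_mult)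
qed

lemma comm_ring_hom_single_0:
  "comm_ring_hom (Poly_Mapping.single 0 :: 'b \<Rightarrow> ('a::comm_monoid_add \<Rightarrow>\<^sub>0 'b::comm_ring_1))"
  by unfold_locales (simp_all add: single_add mult_single)

lemma lookup_single_0_mult:
  "Poly_Mapping.lookup (Poly_Mapping.single 0 c * p) k = c * Poly_Mapping.lookup p k"
  for p :: "'a::comm_monoid_add \<Rightarrow>\<^sub>0 'b::semiring_1"
  by (induction p rule: poly_mapping_induct) (simp_all add: mult_single lookup_single when_def distrib_left lookup_add)

lemma single_power:
  "Poly_Mapping.single (Poly_Mapping.single i (1::nat)) (1::'b::comm_semiring_1) ^ n =
     Poly_Mapping.single (Poly_Mapping.single i n) 1"
  by (induction n) (simp_all add: mult_single flip: single_add)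

lemma prod_single:
  "finite S \<Longrightarrow> (\<Prod>i\<in>S. Poly_Mapping.single (g i) (1::'b::comm_semiring_1)) = Poly_Mapping.single (\<Sum>i\<in>S. g i) 1"
  by (induction S rule: finite_induct) (simp_all add: mult_single)

lemma monom_eval_var: "monom_eval var m = (Poly_Mapping.single m 1 :: mpoly)"
proof -
  have "monom_eval var m =
      (\<Prod>i\<in>Poly_Mapping.keys m. Poly_Mapping.single (Poly_Mapping.single i (Poly_Mapping.lookup m i)) (1::rat))"
    unfolding monom_eval_def var_def single_power by simp
  also have "\<dots> = Poly_Mapping.single m 1"
    by (simp add: prod_single flip: poly_mapping_eq_sum_single)
  finally show ?thesis .
qed

lemma insertion_var_self: "insertion (Poly_Mapping.single 0) var p = p"
proof (induction p rule: poly_mapping_induct)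
  case zero
  show ?case by (simp add: insertion_def)
next
  case (add p q)
  interpret comm_ring_hom "insertion (Poly_Mapping.single 0) var"
    by (rule comm_ring_hom_insertion[OF comm_ring_hom_single_0])
  from add show ?case by (simp add: hom_add)
qed (simp_all add: insertion_single comm_ring_hom_single_0 monom_eval_var mult_single)

section \<open>Variables of a polynomial and the identity theorem\<close>

definition vars_in :: "nat set \<Rightarrow> mpoly \<Rightarrow> bool" where
  "vars_in A q \<longleftrightarrow> (\<forall>m\<in>Poly_Mapping.keys q. Poly_Mapping.keys m \<subseteq> A)"

lemma in_Qx_iff_vars_in: "in_Qx n p \<longleftrightarrow> vars_in {1..n} p"
  by (simp add: in_Qx_def vars_in_def)

lemma vars_in_0 [simp]: "vars_in A 0"
  by (simp add: vars_in_def)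

lemma vars_in_const [simp]: "vars_in A (Poly_Mapping.single 0 c)"
  by (simp add: vars_in_def)

lemma vars_in_1 [simp]: "vars_in A 1"
  by (simp add: vars_in_def)

lemma vars_in_var: "i \<in> A \<Longrightarrow> vars_in A (var i)"
  by (simp add: vars_in_def var_def)

lemma vars_in_add: "vars_in A p \<Longrightarrow> vars_in A q \<Longrightarrow> vars_in A (p + q)"
  using keys_add[of p q] by (auto simp: vars_in_def)

lemma vars_in_uminus: "vars_in A p \<Longrightarrow> vars_in A (- p)"
  by (simp add: vars_in_def)

lemma vars_in_diff: "vars_in A p \<Longrightarrow> vars_in A q \<Longrightarrow> vars_in A (p - q)"
  using vars_in_add[of A p "- q"] vars_in_uminus[of A q] by simp

lemma vars_in_mult: "vars_in A p \<Longrightarrow> vars_in A q \<Longrightarrow> vars_in A (p * q)"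
proof (unfold vars_in_def, intro ballI)
  fix m assume "\<forall>m\<in>Poly_Mapping.keys p. Poly_Mapping.keys m \<subseteq> A"
    and "\<forall>m\<in>Poly_Mapping.keys q. Poly_Mapping.keys m \<subseteq> A" and "m \<in> Poly_Mapping.keys (p * q)"
  moreover obtain a b where "m = a + b" "a \<in> Poly_Mapping.keys p" "b \<in> Poly_Mapping.keys q"
    using keys_mult[of p q] \<open>m \<in> Poly_Mapping.keys (p * q)\<close> by blast
  ultimately show "Poly_Mapping.keys m \<subseteq> A" using keys_add[of a b] by blast
qed

lemma vars_in_sum: "(\<And>x. x \<in> S \<Longrightarrow> vars_in A (g x)) \<Longrightarrow> vars_in A (sum g S)"
  by (rule sum_closed) (auto intro: vars_in_add)

lemma vars_in_prod: "(\<And>x. x \<in> S \<Longrightarrow> vars_in A (g x)) \<Longrightarrow> vars_in A (prod g S)"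
  by (rule prod_closed) (auto intro: vars_in_mult)

lemma vars_in_power: "vars_in A p \<Longrightarrow> vars_in A (p ^ k)"
  by (rule power_closed) (auto intro: vars_in_mult)

lemma vars_in_mono: "A \<subseteq> B \<Longrightarrow> vars_in A q \<Longrightarrow> vars_in B q"
  by (auto simp: vars_in_def)

lemma insertion_cong_vars_in:
  "vars_in A q \<Longrightarrow> (\<And>i. i \<in> A \<Longrightarrow> f i = f' i) \<Longrightarrow> insertion h f q = insertion h f' q"
  unfolding vars_in_def by (rule insertion_cong) blast

lemma ex_vars_in_lessThan: "\<exists>K. vars_in {..<K} c"
proof -
  have "finite (\<Union>m\<in>Poly_Mapping.keys c. Poly_Mapping.keys m)" by simp
  then obtain K where "(\<Union>m\<in>Poly_Mapping.keys c. Poly_Mapping.keys m) \<subseteq> {..<K}"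
    using finite_nat_bounded by blast
  then have "vars_in {..<K} c" unfolding vars_in_def by blast
  then show ?thesis ..
qed

lemma vars_in_empty_imp_const: "vars_in {} c \<Longrightarrow> c = Poly_Mapping.single 0 (Poly_Mapping.lookup c 0)"
  by (rule poly_mapping_eqI) (auto simp: vars_in_def lookup_single when_def in_keys_iff)

lemma comm_ring_hom_poly: "comm_ring_hom (\<lambda>p. poly p x)"
  by unfold_locales simp_all

lemma comm_ring_hom_of_rat: "comm_ring_hom (of_rat :: rat \<Rightarrow> 'a::field_char_0)"
  by unfold_locales (simp_all add: of_rat_add of_rat_mult)

lemma map_poly_const: "f 0 = 0 \<Longrightarrow> map_poly f [:x:] = [:f x:]"
  by (intro poly_eqI) (simp add: coeff_map_poly coeff_pCons split: nat.splits)

definition poly_in_var :: "nat \<Rightarrow> mpoly \<Rightarrow> mpoly poly" where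
  "poly_in_var j = insertion (\<lambda>c. [:Poly_Mapping.single 0 c:]) (\<lambda>i. if i = j then [:0, 1:] else [:var i:])"

lemma comm_ring_hom_poly_in_var: "comm_ring_hom (poly_in_var j)"
proof -
  have "comm_ring_hom (\<lambda>x::mpoly. [:x:])" by unfold_locales simp_all
  then have "comm_ring_hom (\<lambda>c. [:Poly_Mapping.single 0 c :: mpoly:])"
    using comm_ring_hom_comp[OF comm_ring_hom_single_0] by (simp add: comp_def)
  then show ?thesis unfolding poly_in_var_def by (rule comm_ring_hom_insertion)
qed

lemma poly_map_poly_in_var:
  assumes h: "comm_ring_hom h"
  shows "poly (map_poly (insertion h f) (poly_in_var j c)) t = insertion h (f(j := t)) c"
proof -
  interpret ins: comm_ring_hom "insertion h f" by (rule comm_ring_hom_insertion[OF h])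
  let ?g = "(\<lambda>P. poly P t) \<circ> map_poly (insertion h f)"
  have g: "comm_ring_hom ?g"
    by (intro comm_ring_hom_comp comm_ring_hom_map_poly comm_ring_hom_poly ins.comm_ring_hom_axioms)
  have "?g (poly_in_var j c) =
      insertion (?g \<circ> (\<lambda>c. [:Poly_Mapping.single 0 c:])) (?g \<circ> (\<lambda>i. if i = j then [:0, 1:] else [:var i:])) c"
    unfolding poly_in_var_def by (rule hom_insertion[OF g])
  also have "\<dots> = insertion h (f(j := t)) c"
    by (intro arg_cong2[where f="\<lambda>a b. insertion a b c"])
       (auto simp: fun_eq_iff map_poly_const map_poly_pCons h)
  finally show ?thesis by simp
qed

lemma poly_poly_in_var_var: "poly (poly_in_var j c) (var j) = c"
proof -
  have "insertion (Poly_Mapping.single 0) var = id"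
    by (rule ext) (simp add: insertion_var_self)
  then show ?thesis
    using poly_map_poly_in_var[OF comm_ring_hom_single_0, of var j c "var j"]
    by (simp add: map_poly_id insertion_var_self)
qed

lemma vars_in_coeff_poly_in_var:
  assumes "vars_in (insert j A) c"
  shows "vars_in A (coeff (poly_in_var j c) k)"
proof -
  let ?Q = "\<lambda>P. \<forall>k. vars_in A (coeff P k)"
  have "?Q (poly_in_var j c)"
    unfolding poly_in_var_def
  proof (rule insertion_closed[where Q = ?Q])
    show "?Q (P + P')" if "?Q P" "?Q P'" for P P'
      using that by (simp add: vars_in_add)
    show "?Q (P * P')" if "?Q P" "?Q P'" for P P'
      using that unfolding coeff_mult by (auto intro!: vars_in_sum vars_in_mult)
    show "?Q (if i = j then [:0, 1:] else [:var i:])" if "m \<in> Poly_Mapping.keys c" "i \<in> Poly_Mapping.keys m" for m i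
      using assms that by (auto simp: vars_in_def coeff_pCons var_def split: nat.splits)
  qed (simp_all add: coeff_pCons coeff_1 split: nat.splits)
  then show ?thesis by blast
qed

abbreviation eval_at :: "(nat \<Rightarrow> complex) \<Rightarrow> mpoly \<Rightarrow> complex" where
  "eval_at v \<equiv> insertion of_rat v"

lemma comm_ring_hom_eval_at: "comm_ring_hom (eval_at v)"
  by (rule comm_ring_hom_insertion[OF comm_ring_hom_of_rat])

lemma eq_0_if_eval_at_eq_0:
  assumes "\<And>v. eval_at v c = 0"
  shows "c = 0"
proof -
  obtain K where "vars_in {..<K} c" using ex_vars_in_lessThan by blast
  then show ?thesis using assms
  proof (induction K arbitrary: c)
    case 0
    then have c: "c = Poly_Mapping.single 0 (Poly_Mapping.lookup c 0)"
      by (intro vars_in_empty_imp_const) simp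
    have "eval_at (\<lambda>_. 0) c = 0" by (rule 0)
    then have "of_rat (Poly_Mapping.lookup c 0) = (0::complex)"
      by (subst (asm) c) (simp add: comm_ring_hom_of_rat)
    then show ?case by (subst c) simp
  next
    case (Suc K)
    have "coeff (poly_in_var K c) k = 0" for k
    proof (rule Suc.IH)
      show "vars_in {..<K} (coeff (poly_in_var K c) k)"
        using Suc.prems(1) by (intro vars_in_coeff_poly_in_var) (simp add: lessThan_Suc)
      have "poly (map_poly (eval_at v) (poly_in_var K c)) t = 0" for v t
        by (simp add: poly_map_poly_in_var[OF comm_ring_hom_of_rat] Suc.prems(2))
      then have "map_poly (eval_at v) (poly_in_var K c) = 0" for v
        using poly_all_0_iff_0 by blast
      then show "eval_at v (coeff (poly_in_var K c) k) = 0" for v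
        by (metis coeff_0 coeff_map_poly insertion_0)
    qed
    then have "poly_in_var K c = 0" by (intro poly_eqI) simp
    then show ?case using poly_poly_in_var_var[of K c] by simp
  qed
qed

definition circle_rel :: "nat \<Rightarrow> nat \<Rightarrow> mpoly" where
  "circle_rel n i = Y n i ^ 2 - (1 - X i ^ 2)"

definition circle_ideal :: "nat \<Rightarrow> mpoly set" where
  "circle_ideal n = {\<Sum>i\<in>{1..n-1}. c i * circle_rel n i | c. True}"

lemma cong_y_iff: "cong_y n a b \<longleftrightarrow> a - b \<in> circle_ideal n"
  by (simp add: cong_y_def circle_ideal_def circle_rel_def)

lemma sum_in_circle_ideal: "(\<Sum>i\<in>{1..n-1}. c i * circle_rel n i) \<in> circle_ideal n"
  by (auto simp: circle_ideal_def)

lemma circle_ideal_0: "0 \<in> circle_ideal n"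
  using sum_in_circle_ideal[of "\<lambda>_. 0" n] by simp

lemma circle_ideal_add:
  assumes "a \<in> circle_ideal n" "b \<in> circle_ideal n"
  shows "a + b \<in> circle_ideal n"
proof -
  obtain c c' where "a = (\<Sum>i\<in>{1..n-1}. c i * circle_rel n i)" "b = (\<Sum>i\<in>{1..n-1}. c' i * circle_rel n i)"
    using assms unfolding circle_ideal_def by blast
  then have "a + b = (\<Sum>i\<in>{1..n-1}. (c i + c' i) * circle_rel n i)"
    by (simp add: sum.distrib distrib_right)
  then show ?thesis using sum_in_circle_ideal[of "\<lambda>i. c i + c' i" n] by simp
qed

lemma circle_ideal_mult:
  assumes "a \<in> circle_ideal n"
  shows "r * a \<in> circle_ideal n"
proof -
  obtain c where "a = (\<Sum>i\<in>{1..n-1}. c i * circle_rel n i)"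
    using assms unfolding circle_ideal_def by blast
  then have "r * a = (\<Sum>i\<in>{1..n-1}. (r * c i) * circle_rel n i)"
    by (simp add: sum_distrib_left mult.assoc)
  then show ?thesis using sum_in_circle_ideal[of "\<lambda>i. r * c i" n] by simp
qed

lemma circle_rel_in_circle_ideal:
  assumes "i \<in> {1..n-1}"
  shows "circle_rel n i \<in> circle_ideal n"
proof -
  have "(\<Sum>j\<in>{1..n-1}. (if j = i then 1 else 0) * circle_rel n j) = (\<Sum>j\<in>{1..n-1}. if j = i then circle_rel n j else 0)"
    by (rule sum.cong) auto
  also have "\<dots> = circle_rel n i" using assms by (simp add: sum.delta)
  finally show ?thesis using sum_in_circle_ideal[of "\<lambda>j. if j = i then 1 else 0" n] by simp
qed

lemma cong_y_refl: "cong_y n a a"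
  by (simp add: cong_y_iff circle_ideal_0)

lemma cong_y_add: "cong_y n a b \<Longrightarrow> cong_y n c d \<Longrightarrow> cong_y n (a + c) (b + d)"
  using circle_ideal_add[of "a - b" n "c - d"] by (simp add: cong_y_iff algebra_simps)

lemma cong_y_mult: "cong_y n a b \<Longrightarrow> cong_y n c d \<Longrightarrow> cong_y n (a * c) (b * d)"
  using circle_ideal_add[OF circle_ideal_mult[of "a - b" n c] circle_ideal_mult[of "c - d" n b]]
  by (simp add: cong_y_iff algebra_simps)

lemma cong_y_power: "cong_y n a b \<Longrightarrow> cong_y n (a ^ k) (b ^ k)"
  by (induction k) (simp_all add: cong_y_refl cong_y_mult)

lemma cong_y_prod: "(\<And>x. x \<in> S \<Longrightarrow> cong_y n (f x) (g x)) \<Longrightarrow> cong_y n (prod f S) (prod g S)"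
  by (induction S rule: infinite_finite_induct) (simp_all add: cong_y_refl cong_y_mult)

lemma hom_eq_if_cong_y:
  assumes g: "comm_ring_hom g" and rel: "\<And>i. i \<in> {1..n-1} \<Longrightarrow> g (circle_rel n i) = 0"
    and "cong_y n a b"
  shows "g a = g b"
proof -
  interpret comm_ring_hom g by fact
  obtain c where "a - b = (\<Sum>i\<in>{1..n-1}. c i * circle_rel n i)"
    using \<open>cong_y n a b\<close> by (auto simp: cong_y_iff circle_ideal_def)
  then have "g (a - b) = (\<Sum>i\<in>{1..n-1}. g (c i) * g (circle_rel n i))"
    by (simp add: hom_sum hom_mult)
  also have "\<dots> = 0" by (simp add: rel)
  finally show ?thesis by (simp add: hom_minus)
qed

section \<open>Reduction to degree at most one in each \<open>y\<^sub>i\<close>\<close>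

definition y_square_part :: "nat \<Rightarrow> (nat \<Rightarrow>\<^sub>0 nat) \<Rightarrow> (nat \<Rightarrow>\<^sub>0 nat)" where
  "y_square_part n m =
     (\<Sum>i\<in>{1..n-1}. Poly_Mapping.single (n + i) (2 * (Poly_Mapping.lookup m (n + i) div 2)))"

lemma lookup_y_square_part:
  "Poly_Mapping.lookup (y_square_part n m) k =
     (if n < k \<and> k < 2 * n then 2 * (Poly_Mapping.lookup m k div 2) else 0)"
proof -
  have "Poly_Mapping.lookup (y_square_part n m) k =
      (\<Sum>i\<in>{1..n-1}. if i = k - n \<and> n < k then 2 * (Poly_Mapping.lookup m k div 2) else 0)"
    unfolding y_square_part_def lookup_sum by (intro sum.cong refl) (auto simp: lookup_single when_def)
  also have "\<dots> = (if n < k \<and> k < 2 * n then 2 * (Poly_Mapping.lookup m k div 2) else 0)"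
    by (cases "n < k") (auto simp: sum.delta)
  finally show ?thesis .
qed

lemma lookup_minus_y_square_part:
  "Poly_Mapping.lookup (m - y_square_part n m) k =
     (if n < k \<and> k < 2 * n then Poly_Mapping.lookup m k mod 2 else Poly_Mapping.lookup m k)"
  by (simp add: lookup_minus lookup_y_square_part minus_mod_eq_mult_div[symmetric])

definition reduce_monom :: "nat \<Rightarrow> (nat \<Rightarrow>\<^sub>0 nat) \<Rightarrow> mpoly" where
  "reduce_monom n m = Poly_Mapping.single (m - y_square_part n m) 1 *
     (\<Prod>i\<in>{1..n-1}. (1 - X i ^ 2) ^ (Poly_Mapping.lookup m (n + i) div 2))"

definition reduce :: "nat \<Rightarrow> mpoly \<Rightarrow> mpoly" where
  "reduce n = lin_ext (Poly_Mapping.single 0) (reduce_monom n)"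

lemma cong_y_reduce_monom: "cong_y n (Poly_Mapping.single m 1) (reduce_monom n m)"
proof -
  have "(Y n i ^ 2) ^ k = Poly_Mapping.single (Poly_Mapping.single (n + i) (2 * k)) 1" for i k
    unfolding Y_def var_def power_mult[symmetric] by (rule single_power)
  then have "Poly_Mapping.single (y_square_part n m) (1::rat) =
      (\<Prod>i\<in>{1..n-1}. (Y n i ^ 2) ^ (Poly_Mapping.lookup m (n + i) div 2))"
    by (simp add: y_square_part_def prod_single)
  moreover have "m - y_square_part n m + y_square_part n m = m"
    by (rule poly_mapping_eqI) (simp add: lookup_add lookup_minus_y_square_part lookup_y_square_part)
  ultimately have m: "Poly_Mapping.single m (1::rat) = Poly_Mapping.single (m - y_square_part n m) 1 *
      (\<Prod>i\<in>{1..n-1}. (Y n i ^ 2) ^ (Poly_Mapping.lookup m (n + i) div 2))"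
    by (metis mult_single mult_1)
  have "cong_y n (Y n i ^ 2) (1 - X i ^ 2)" if "i \<in> {1..n-1}" for i
    using circle_rel_in_circle_ideal[OF that] by (simp add: cong_y_iff circle_rel_def)
  then show ?thesis
    unfolding m reduce_monom_def by (intro cong_y_mult cong_y_refl cong_y_prod cong_y_power)
qed

lemma cong_y_reduce: "cong_y n q (reduce n q)"
proof (induction q rule: poly_mapping_induct)
  case (single m c)
  have "cong_y n (Poly_Mapping.single 0 c * Poly_Mapping.single m 1) (Poly_Mapping.single 0 c * reduce_monom n m)"
    by (intro cong_y_mult cong_y_refl cong_y_reduce_monom)
  then show ?case by (simp add: reduce_def lin_ext_single mult_single)
next
  case (add p q)
  then show ?case by (simp add: reduce_def lin_ext_add single_add cong_y_add)
qed (simp add: reduce_def cong_y_refl)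

definition reduced_in_y :: "nat \<Rightarrow> mpoly \<Rightarrow> bool" where
  "reduced_in_y n q \<longleftrightarrow> (\<forall>m\<in>Poly_Mapping.keys q. Poly_Mapping.keys m \<subseteq> {1..2*n-1} \<and>
      (\<forall>i\<in>{1..n-1}. Poly_Mapping.lookup m (n + i) \<le> 1))"

lemma reduced_in_y_add: "reduced_in_y n a \<Longrightarrow> reduced_in_y n b \<Longrightarrow> reduced_in_y n (a + b)"
  using keys_add[of a b] unfolding reduced_in_y_def by blast

lemma reduced_in_y_reduce_monom:
  assumes "Poly_Mapping.keys m \<subseteq> {1..2*n-1}"
  shows "reduced_in_y n (reduce_monom n m)"
  unfolding reduced_in_y_def
proof
  let ?Z = "\<Prod>i\<in>{1..n-1}. (1 - X i ^ 2) ^ (Poly_Mapping.lookup m (n + i) div 2)"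
  fix k assume "k \<in> Poly_Mapping.keys (reduce_monom n m)"
  then obtain z where k: "k = (m - y_square_part n m) + z" and z: "z \<in> Poly_Mapping.keys ?Z"
    using keys_mult[of "Poly_Mapping.single (m - y_square_part n m) (1::rat)" ?Z]
    by (auto simp: reduce_monom_def)
  have "vars_in {1..n-1} ?Z"
    unfolding X_def by (intro vars_in_prod vars_in_power vars_in_diff vars_in_1 vars_in_var) auto
  then have z_keys: "Poly_Mapping.keys z \<subseteq> {1..n-1}" using z unfolding vars_in_def by blast
  have "Poly_Mapping.keys (m - y_square_part n m) \<subseteq> Poly_Mapping.keys m"
    by (auto simp: in_keys_iff lookup_minus_y_square_part split: if_splits)
  moreover have "{1..n-1} \<subseteq> {1..2*n-1}" by auto
  ultimately have "Poly_Mapping.keys k \<subseteq> {1..2*n-1}"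
    using keys_add[of "m - y_square_part n m" z] k z_keys assms by blast
  moreover have "Poly_Mapping.lookup k (n + i) \<le> 1" if "i \<in> {1..n-1}" for i
  proof -
    have "Poly_Mapping.lookup z (n + i) = 0" using that z_keys by (auto simp: in_keys_iff)
    moreover have "n < n + i \<and> n + i < 2 * n" using that by auto
    ultimately show ?thesis by (simp add: k lookup_add lookup_minus_y_square_part)
  qed
  ultimately show "Poly_Mapping.keys k \<subseteq> {1..2*n-1} \<and> (\<forall>i\<in>{1..n-1}. Poly_Mapping.lookup k (n + i) \<le> 1)"
    by blast
qed

lemma reduced_in_y_reduce:
  assumes "vars_in {1..2*n-1} q"
  shows "reduced_in_y n (reduce n q)"
  unfolding reduce_def lin_ext_def
proof (rule sum_closed[where Q = "reduced_in_y n"])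
  show "reduced_in_y n 0" by (simp add: reduced_in_y_def)
  show "reduced_in_y n (a + b)" if "reduced_in_y n a" "reduced_in_y n b" for a b
    using that by (rule reduced_in_y_add)
  fix m assume "m \<in> Poly_Mapping.keys q"
  then have "reduced_in_y n (reduce_monom n m)"
    using assms by (intro reduced_in_y_reduce_monom) (auto simp: vars_in_def)
  then show "reduced_in_y n (Poly_Mapping.single 0 (Poly_Mapping.lookup q m) * reduce_monom n m)"
    by (auto simp: reduced_in_y_def in_keys_iff lookup_single_0_mult)
qed

definition cos_expansion :: "(nat \<Rightarrow> 'a::comm_ring_1) \<Rightarrow> (nat \<Rightarrow> 'a) \<Rightarrow> nat \<Rightarrow> 'a" where
  "cos_expansion ys xs m = (\<Sum>S \<in> {S \<in> Pow {1..m}. even (card S)}.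
      (-1) ^ (card S div 2) * prod ys S * (\<Prod>j\<in>{1..m} - S. xs j))"

lemma EC_eq_cos_expansion: "EC ys m = cos_expansion ys X m"
  by (simp add: EC_def cos_expansion_def)

lemma hom_cos_expansion:
  assumes "comm_ring_hom g"
  shows "g (cos_expansion ys xs m) = cos_expansion (\<lambda>j. g (ys j)) (\<lambda>j. g (xs j)) m"
proof -
  interpret comm_ring_hom g by fact
  show ?thesis
    unfolding cos_expansion_def hom_sum hom_mult hom_power hom_uminus hom_one hom_prod ..
qed

lemma cos_expansion_cong:
  assumes "\<And>j. j \<in> {1..m} \<Longrightarrow> ys j = ys' j" "\<And>j. j \<in> {1..m} \<Longrightarrow> xs j = xs' j"
  shows "cos_expansion ys xs m = cos_expansion ys' xs' m"
  unfolding cos_expansion_def using assms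
  by (intro sum.cong refl arg_cong2[where f="(*)"] prod.cong) auto

lemma cos_expansion_uminus: "cos_expansion (\<lambda>j. - ys j) xs m = cos_expansion ys xs m"
  unfolding cos_expansion_def by (intro sum.cong refl) (simp add: prod_uminus)

lemma cos_expansion_eq_half_sum_prods:
  fixes xs ys u v :: "nat \<Rightarrow> 'a::comm_ring_1"
  assumes i: "i * i = -1" and h: "h * 2 = 1"
    and u: "\<And>j. j \<in> {1..m} \<Longrightarrow> i * ys j + xs j = u j"
    and v: "\<And>j. j \<in> {1..m} \<Longrightarrow> (- i) * ys j + xs j = v j"
  shows "cos_expansion ys xs m = h * ((\<Prod>j\<in>{1..m}. u j) + (\<Prod>j\<in>{1..m}. v j))"
proof -
  let ?t = "\<lambda>S. prod ys S * (\<Prod>j\<in>{1..m} - S. xs j)"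
  have expand: "(\<Prod>j\<in>{1..m}. c * ys j + xs j) = (\<Sum>S\<in>Pow {1..m}. c ^ card S * ?t S)" for c
  proof -
    have "(\<Prod>j\<in>{1..m}. c * ys j + xs j) = (\<Sum>S\<in>Pow {1..m}. (\<Prod>j\<in>S. c * ys j) * (\<Prod>j\<in>{1..m} - S. xs j))"
      by (rule prod_add) simp
    then show ?thesis by (simp add: prod.distrib mult.assoc)
  qed
  have powers: "i ^ k + (- i) ^ k = (if even k then 2 * (-1) ^ (k div 2) else 0)" for k
  proof (cases "even k")
    case True
    then obtain l where "k = 2 * l" by blast
    then show ?thesis by (simp add: power_mult power2_eq_square i)
  qed (simp add: power_minus_odd)
  have "(\<Prod>j\<in>{1..m}. u j) + (\<Prod>j\<in>{1..m}. v j) = (\<Sum>S\<in>Pow {1..m}. (i ^ card S + (- i) ^ card S) * ?t S)"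
    using expand[of i] expand[of "- i"] u v by (simp add: sum.distrib distrib_right)
  also have "\<dots> = (\<Sum>S\<in>Pow {1..m}. if even (card S) then 2 * ((-1) ^ (card S div 2) * ?t S) else 0)"
    by (intro sum.cong refl) (simp add: powers mult.assoc)
  also have "\<dots> = 2 * cos_expansion ys xs m"
    by (simp add: sum.inter_filter[symmetric] cos_expansion_def sum_distrib_left mult.assoc)
  finally show ?thesis
    by (metis h mult.assoc mult.commute mult_1)
qed

section \<open>Elimination of the \<open>y\<^sub>i\<close>\<close>

definition flip_y :: "nat \<Rightarrow> nat \<Rightarrow> mpoly \<Rightarrow> mpoly" where
  "flip_y n i = insertion (Poly_Mapping.single 0) (\<lambda>k. if k = n + i then - var k else var k)"

lemma comm_ring_hom_flip_y: "comm_ring_hom (flip_y n i)"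
  unfolding flip_y_def by (rule comm_ring_hom_insertion[OF comm_ring_hom_single_0])

lemma lookup_flip_y:
  "Poly_Mapping.lookup (flip_y n i q) m = (-1) ^ Poly_Mapping.lookup m (n + i) * Poly_Mapping.lookup q m"
proof (induction q rule: poly_mapping_induct)
  case (single k c)
  have "(\<lambda>k. if k = n + i then - var k else var k) = (\<lambda>k. (if k = n + i then -1 else 1) * (var k :: mpoly))"
    by auto
  then have "flip_y n i (Poly_Mapping.single k c) =
      Poly_Mapping.single 0 c * ((-1) ^ Poly_Mapping.lookup k (n + i) * Poly_Mapping.single k 1)"
    by (simp add: flip_y_def insertion_single comm_ring_hom_single_0 monom_eval_mult monom_eval_if_eq
        monom_eval_var)
  then show ?case
    by (simp add: mult_single lookup_single when_def single_uminus minus_one_power_iff)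
next
  case (add p q)
  interpret comm_ring_hom "flip_y n i" by (rule comm_ring_hom_flip_y)
  from add show ?case by (simp add: hom_add lookup_add distrib_left)
qed (simp add: flip_y_def)

lemma flip_y_var: "flip_y n i (var k) = (if k = n + i then - var k else var k)"
  by (simp add: flip_y_def comm_ring_hom_single_0)

lemma flip_y_X: "k \<noteq> n + i \<Longrightarrow> flip_y n i (X k) = X k"
  by (simp add: X_def flip_y_var)

lemma flip_y_sigma_y: "flip_y n i (sigma_y n T j) = sigma_y n (if i \<in> T then T - {i} else insert i T) j"
proof -
  interpret comm_ring_hom "flip_y n i" by (rule comm_ring_hom_flip_y)
  show ?thesis by (auto simp: sigma_y_def Y_def flip_y_var hom_uminus)
qed

lemma flip_y_circle_rel: "k \<in> {1..n-1} \<Longrightarrow> flip_y n i (circle_rel n k) = circle_rel n k"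
proof -
  assume "k \<in> {1..n-1}"
  then have "k \<noteq> n + i" by auto
  interpret comm_ring_hom "flip_y n i" by (rule comm_ring_hom_flip_y)
  show ?thesis by (simp add: circle_rel_def Y_def hom_distribs flip_y_X flip_y_var \<open>k \<noteq> n + i\<close>)
qed

lemma cong_y_flip_y:
  assumes "cong_y n a b"
  shows "cong_y n (flip_y n i a) (flip_y n i b)"
proof -
  interpret comm_ring_hom "flip_y n i" by (rule comm_ring_hom_flip_y)
  obtain c where "a - b = (\<Sum>k\<in>{1..n-1}. c k * circle_rel n k)"
    using assms by (auto simp: cong_y_iff circle_ideal_def)
  then have "flip_y n i a - flip_y n i b = (\<Sum>k\<in>{1..n-1}. flip_y n i (c k) * circle_rel n k)"
    by (simp add: flip: hom_minus) (simp add: hom_sum hom_mult flip_y_circle_rel)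
  then show ?thesis using sum_in_circle_ideal[of "\<lambda>k. flip_y n i (c k)" n] by (simp add: cong_y_iff)
qed

text \<open>The sign change \<open>y\<^sub>i \<mapsto> -y\<^sub>i\<close> permutes the factors of \<open>P_lift n\<close>: via
  \<open>T \<mapsto> T \<triangle> {i}\<close> for \<open>i \<ge> 2\<close>, and for \<open>i = 1\<close> via the complement \<open>T \<mapsto> {2..n-1} - T\<close>
  together with a global sign change of all \<open>y\<^sub>j\<close>, which leaves \<open>EC\<close> unchanged.\<close>

lemma flip_y_permutes_factors:
  assumes i: "i \<in> {1..n-1}"
  obtains \<tau> where "\<And>T. T \<in> Pow {2..n-1} \<Longrightarrow> \<tau> T \<in> Pow {2..n-1} \<and> \<tau> (\<tau> T) = T \<and>
      flip_y n i (X n - EC (sigma_y n T) (n-1)) = X n - EC (sigma_y n (\<tau> T)) (n-1)"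
proof -
  interpret comm_ring_hom "flip_y n i" by (rule comm_ring_hom_flip_y)
  let ?J = "{2..n-1}"
  let ?F = "\<lambda>T. X n - EC (sigma_y n T) (n-1)"
  have flip_F: "flip_y n i (?F T) = X n - cos_expansion (\<lambda>j. flip_y n i (sigma_y n T j)) X (n-1)" for T
  proof -
    have "flip_y n i (EC (sigma_y n T) (n-1)) = cos_expansion (\<lambda>j. flip_y n i (sigma_y n T j)) X (n-1)"
      unfolding EC_eq_cos_expansion hom_cos_expansion[OF comm_ring_hom_flip_y]
      by (rule cos_expansion_cong) (use i in \<open>auto intro: flip_y_X\<close>)
    moreover have "flip_y n i (X n) = X n" using i by (intro flip_y_X) auto
    ultimately show ?thesis by (simp add: hom_minus)
  qed
  show ?thesis
  proof (cases "i = 1")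
    case True
    have "flip_y n i (?F T) = ?F (?J - T)" if "T \<in> Pow ?J" for T
    proof -
      have "flip_y n i (sigma_y n T j) = - sigma_y n (?J - T) j" if "j \<in> {1..n-1}" for j
        unfolding flip_y_sigma_y using \<open>T \<in> Pow ?J\<close> that True by (auto simp: sigma_y_def)
      then have "cos_expansion (\<lambda>j. flip_y n i (sigma_y n T j)) X (n-1) =
          cos_expansion (\<lambda>j. - sigma_y n (?J - T) j) X (n-1)"
        by (intro cos_expansion_cong) auto
      then show ?thesis unfolding flip_F by (simp add: EC_eq_cos_expansion cos_expansion_uminus)
    qed
    then show ?thesis by (intro that[of "\<lambda>T. ?J - T"]) auto
  next
    case False
    have "flip_y n i (?F T) = ?F (if i \<in> T then T - {i} else insert i T)" for T
      by (subst flip_F) (simp add: flip_y_sigma_y EC_eq_cos_expansion)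
    moreover have "i \<in> ?J" using i False by auto
    ultimately show ?thesis by (intro that[of "\<lambda>T. if i \<in> T then T - {i} else insert i T"]) auto
  qed
qed

lemma flip_y_P_lift:
  assumes "i \<in> {1..n-1}"
  shows "flip_y n i (P_lift n) = P_lift n"
proof -
  interpret comm_ring_hom "flip_y n i" by (rule comm_ring_hom_flip_y)
  obtain \<tau> where \<tau>: "\<And>T. T \<in> Pow {2..n-1} \<Longrightarrow> \<tau> T \<in> Pow {2..n-1} \<and> \<tau> (\<tau> T) = T \<and>
      flip_y n i (X n - EC (sigma_y n T) (n-1)) = X n - EC (sigma_y n (\<tau> T)) (n-1)"
    using flip_y_permutes_factors[OF assms] by blast
  have "flip_y n i (P_lift n) = (\<Prod>T\<in>Pow {2..n-1}. X n - EC (sigma_y n (\<tau> T)) (n-1))"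
    unfolding P_lift_def hom_prod using \<tau> by (intro prod.cong) auto
  also have "\<dots> = P_lift n"
    unfolding P_lift_def by (rule prod.reindex_bij_witness[where i=\<tau> and j=\<tau>]) (use \<tau> in auto)
  finally show ?thesis .
qed

definition average_flip :: "nat \<Rightarrow> nat \<Rightarrow> mpoly \<Rightarrow> mpoly" where
  "average_flip n i q = Poly_Mapping.single 0 (1/2) * (q + flip_y n i q)"

lemma lookup_average_flip:
  "Poly_Mapping.lookup (average_flip n i q) m =
     (if even (Poly_Mapping.lookup m (n + i)) then Poly_Mapping.lookup q m else 0)"
  by (simp add: average_flip_def lookup_single_0_mult lookup_add lookup_flip_y minus_one_power_iff)

lemma cong_y_average_flip:
  assumes "cong_y n P q" "flip_y n i P = P"
  shows "cong_y n P (average_flip n i q)"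
proof -
  have "cong_y n P (flip_y n i q)" using cong_y_flip_y[OF assms(1), of i] assms(2) by simp
  then have avg: "cong_y n (Poly_Mapping.single 0 (1/2) * (P + P)) (average_flip n i q)"
    unfolding average_flip_def by (intro cong_y_mult cong_y_refl cong_y_add assms(1))
  have half: "Poly_Mapping.single 0 (1/2) * (P + P) = P"
  proof -
    have "P + P = Poly_Mapping.single 0 2 * P" by (simp only: single_numeral mult_2)
    then have "Poly_Mapping.single 0 (1/2) * (P + P) = Poly_Mapping.single (0 + 0) (1/2 * 2 :: rat) * P"
      by (simp only: mult.assoc[symmetric] mult_single)
    then show ?thesis by simp
  qed
  from avg show ?thesis unfolding half .
qed

primrec y_even_part :: "nat \<Rightarrow> nat \<Rightarrow> mpoly \<Rightarrow> mpoly" where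
  "y_even_part n 0 q = q"
| "y_even_part n (Suc k) q = average_flip n (Suc k) (y_even_part n k q)"

lemma lookup_y_even_part:
  "Poly_Mapping.lookup (y_even_part n k q) m =
     (if \<forall>i\<in>{1..k}. even (Poly_Mapping.lookup m (n + i)) then Poly_Mapping.lookup q m else 0)"
  by (induction k) (auto simp: lookup_average_flip atLeastAtMostSuc_conv)

lemma cong_y_y_even_part:
  assumes "k \<le> n - 1" "cong_y n P q" "\<And>i. i \<in> {1..n-1} \<Longrightarrow> flip_y n i P = P"
  shows "cong_y n P (y_even_part n k q)"
  using assms(1) by (induction k) (simp_all add: assms(2,3) cong_y_average_flip)

lemma vars_in_EC_sigma_y: "vars_in ({1..2*n-1} - {n}) (EC (sigma_y n T) (n-1))"
  unfolding EC_def
proof (intro vars_in_sum vars_in_mult vars_in_prod vars_in_power vars_in_uminus vars_in_1)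
  fix S j assume S: "S \<in> {S \<in> Pow {1..n-1}. even (card S)}"
  show "vars_in ({1..2*n-1} - {n}) (sigma_y n T j)" if "j \<in> S"
  proof -
    have "j \<in> {1..n-1}" using S that by auto
    then have "n + j \<in> {1..2*n-1} - {n}" by auto
    then show ?thesis by (simp add: sigma_y_def Y_def vars_in_uminus vars_in_var)
  qed
  show "vars_in ({1..2*n-1} - {n}) (X j)" if "j \<in> {1..n-1} - S"
    using that unfolding X_def by (intro vars_in_var) auto
qed

lemma vars_in_P_lift:
  assumes "n \<ge> 1"
  shows "vars_in {1..2*n-1} (P_lift n)"
  unfolding P_lift_def
proof (intro vars_in_prod vars_in_diff)
  show "vars_in {1..2*n-1} (X n)" unfolding X_def by (rule vars_in_var) (use assms in auto)
  show "vars_in {1..2*n-1} (EC (sigma_y n T) (n-1))" for T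
    by (rule vars_in_mono[OF _ vars_in_EC_sigma_y]) auto
qed

lemma in_Qx_y_even_part:
  assumes "reduced_in_y n q"
  shows "in_Qx n (y_even_part n (n-1) q)"
  unfolding in_Qx_iff_vars_in vars_in_def
proof (intro ballI subsetI)
  fix m j assume m: "m \<in> Poly_Mapping.keys (y_even_part n (n-1) q)" and j: "j \<in> Poly_Mapping.keys m"
  then have even: "\<forall>i\<in>{1..n-1}. even (Poly_Mapping.lookup m (n + i))" and "m \<in> Poly_Mapping.keys q"
    by (auto simp: in_keys_iff lookup_y_even_part split: if_splits)
  with assms have keys: "Poly_Mapping.keys m \<subseteq> {1..2*n-1}"
    and le1: "\<forall>i\<in>{1..n-1}. Poly_Mapping.lookup m (n + i) \<le> 1"
    by (auto simp: reduced_in_y_def)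
  show "j \<in> {1..n}"
  proof (rule ccontr)
    assume "j \<notin> {1..n}"
    moreover have "j \<in> {1..2*n-1}" using j keys by blast
    ultimately have "j - n \<in> {1..n-1}" "j = n + (j - n)" by auto
    then have "even (Poly_Mapping.lookup m j)" "Poly_Mapping.lookup m j \<le> 1" using even le1 by metis+
    then have "Poly_Mapping.lookup m j = 0" by presburger
    then show False using j by (simp add: in_keys_iff)
  qed
qed

theorem ex_in_Qx_cong_P_lift:
  assumes "n \<ge> 2"
  shows "\<exists>p. in_Qx n p \<and> cong_y n (P_lift n) p"
proof -
  let ?q = "reduce n (P_lift n)"
  have "cong_y n (P_lift n) (y_even_part n (n-1) ?q)"
    by (intro cong_y_y_even_part cong_y_reduce flip_y_P_lift) auto
  moreover have "in_Qx n (y_even_part n (n-1) ?q)"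
    using assms by (intro in_Qx_y_even_part reduced_in_y_reduce vars_in_P_lift) auto
  ultimately show ?thesis by blast
qed

section \<open>A model in Laurent polynomials\<close>

type_synonym lpoly = "(nat \<Rightarrow>\<^sub>0 int) \<Rightarrow>\<^sub>0 complex"

lemma cos_sin_of_exp:
  fixes i h w w' :: "'a::comm_ring_1"
  assumes i: "i * i = -1" and h: "h * 2 = 1"
  defines "x \<equiv> h * (w + w')" and "y \<equiv> - (i * h) * (w - w')"
  shows "i * y + x = w" and "- i * y + x = w'" and "w * w' = 1 \<Longrightarrow> y ^ 2 = 1 - x ^ 2"
proof -
  have "i * y + x - w = - (i * i + 1) * (h * (w - w')) + (h * 2 - 1) * w"
    unfolding x_def y_def by (simp add: algebra_simps)
  then show "i * y + x = w" using i h by simp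
  have "- i * y + x - w' = (i * i + 1) * (h * (w - w')) + (h * 2 - 1) * w'"
    unfolding x_def y_def by (simp add: algebra_simps)
  then show "- i * y + x = w'" using i h by simp
  assume ww': "w * w' = 1"
  have "y ^ 2 - (1 - x ^ 2) =
      (i * i + 1) * (h * h * ((w - w') * (w - w'))) + (w * w' - 1) * (4 * (h * h)) + (h * 2 - 1) * (h * 2 + 1)"
    unfolding x_def y_def by (simp add: algebra_simps power2_eq_square)
  then show "y ^ 2 = 1 - x ^ 2" using i h ww' by simp
qed

definition laurent_monom :: "(nat \<Rightarrow>\<^sub>0 int) \<Rightarrow> lpoly" where
  "laurent_monom e = Poly_Mapping.single e 1"

definition half :: lpoly where
  "half = Poly_Mapping.single 0 (1/2)"

definition imag_unit :: lpoly where
  "imag_unit = Poly_Mapping.single 0 \<i>"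

lemma half_times_2: "half * 2 = 1"
  by (simp add: half_def mult_single flip: single_numeral)

lemma imag_unit_squared: "imag_unit * imag_unit = -1"
  by (simp add: imag_unit_def mult_single single_uminus)

definition cos_L :: "nat \<Rightarrow> lpoly" where
  "cos_L j = half * (laurent_monom (Poly_Mapping.single j 1) + laurent_monom (Poly_Mapping.single j (-1)))"

definition sin_L :: "nat \<Rightarrow> lpoly" where
  "sin_L j = - (imag_unit * half) * (laurent_monom (Poly_Mapping.single j 1) - laurent_monom (Poly_Mapping.single j (-1)))"

lemma laurent_monom_single_inverse:
  "laurent_monom (Poly_Mapping.single j 1) * laurent_monom (Poly_Mapping.single j (-1)) = 1"
  by (simp add: laurent_monom_def mult_single flip: single_add)

lemma sin_L_squared: "sin_L j ^ 2 = 1 - cos_L j ^ 2"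
  unfolding cos_L_def sin_L_def
  by (rule cos_sin_of_exp(3)[OF imag_unit_squared half_times_2 laurent_monom_single_inverse])

definition sign_exp :: "nat \<Rightarrow> nat set \<Rightarrow> (nat \<Rightarrow>\<^sub>0 int)" where
  "sign_exp n T = (\<Sum>j\<in>{1..n-1}. Poly_Mapping.single j (if j \<in> T then -1 else 1))"

definition cos_L_sum :: "nat \<Rightarrow> nat set \<Rightarrow> lpoly" where
  "cos_L_sum n T = half * (laurent_monom (sign_exp n T) + laurent_monom (- sign_exp n T))"

lemma cos_expansion_sin_L_cos_L: "cos_expansion sin_L cos_L (n-1) = cos_L_sum n {}"
proof -
  have "cos_expansion sin_L cos_L (n-1) =
      half * ((\<Prod>j\<in>{1..n-1}. laurent_monom (Poly_Mapping.single j 1)) +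
              (\<Prod>j\<in>{1..n-1}. laurent_monom (Poly_Mapping.single j (-1))))"
    unfolding cos_L_def sin_L_def
    by (rule cos_expansion_eq_half_sum_prods[OF imag_unit_squared half_times_2 cos_sin_of_exp(1,2)])
       (simp_all add: imag_unit_squared half_times_2)
  also have "\<dots> = cos_L_sum n {}"
    by (simp add: cos_L_sum_def sign_exp_def laurent_monom_def prod_single single_uminus sum_negf)
  finally show ?thesis .
qed

definition flip_exp :: "nat set \<Rightarrow> (nat \<Rightarrow>\<^sub>0 int) \<Rightarrow> (nat \<Rightarrow>\<^sub>0 int)" where
  "flip_exp T e = Poly_Mapping.mapp (\<lambda>j k. if j \<in> T then - k else k) e"

lemma lookup_flip_exp:
  "Poly_Mapping.lookup (flip_exp T e) j = (if j \<in> T then - Poly_Mapping.lookup e j else Poly_Mapping.lookup e j)"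
  by (auto simp: flip_exp_def lookup_mapp when_def in_keys_iff)

lemma flip_exp_0: "flip_exp T 0 = 0"
  by (rule poly_mapping_eqI) (simp add: lookup_flip_exp)

lemma flip_exp_add: "flip_exp T (e + e') = flip_exp T e + flip_exp T e'"
  by (rule poly_mapping_eqI) (simp add: lookup_flip_exp lookup_add)

lemma flip_exp_uminus: "flip_exp T (- e) = - flip_exp T e"
  by (rule poly_mapping_eqI) (simp add: lookup_flip_exp)

lemma flip_exp_flip_exp: "flip_exp T (flip_exp T e) = e"
  by (rule poly_mapping_eqI) (simp add: lookup_flip_exp)

lemma flip_exp_single:
  "flip_exp T (Poly_Mapping.single j k) = Poly_Mapping.single j (if j \<in> T then - k else k)"
  by (rule poly_mapping_eqI) (simp add: lookup_flip_exp lookup_single when_def)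

lemma flip_exp_sign_exp: "flip_exp T (sign_exp n {}) = sign_exp n T"
proof -
  have "flip_exp T (sum g S) = (\<Sum>j\<in>S. flip_exp T (g j))" for g and S :: "nat set"
    by (induction S rule: infinite_finite_induct) (simp_all add: flip_exp_0 flip_exp_add)
  then show ?thesis by (simp add: sign_exp_def flip_exp_single)
qed

lemma inj_flip_exp: "inj (flip_exp T)"
  by (metis flip_exp_flip_exp injI)

definition flip_L :: "nat set \<Rightarrow> lpoly \<Rightarrow> lpoly" where
  "flip_L T = Poly_Mapping.map_key (flip_exp T)"

lemma flip_L_single: "flip_L T (Poly_Mapping.single e c) = Poly_Mapping.single (flip_exp T e) c"
  using map_key_single[OF inj_flip_exp, of T "flip_exp T e" c] by (simp add: flip_L_def flip_exp_flip_exp)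

lemma flip_L_add: "flip_L T (p + q) = flip_L T p + flip_L T q"
  unfolding flip_L_def by (rule map_key_plus[OF inj_flip_exp])

lemma flip_L_mult: "flip_L T (p * q) = flip_L T p * flip_L T q"
proof (induction p rule: poly_mapping_induct)
  case (single k c)
  show ?case
  proof (induction q rule: poly_mapping_induct)
    case (single l d) then show ?case by (simp add: mult_single flip_L_single flip_exp_add)
  next
    case (add q1 q2) then show ?case by (simp add: distrib_left flip_L_add)
  qed (simp add: flip_L_def inj_flip_exp)
next
  case (add p1 p2) then show ?case by (simp add: distrib_right flip_L_add)
qed (simp add: flip_L_def inj_flip_exp)

lemma flip_L_0: "flip_L T 0 = 0"
  by (simp add: flip_L_def inj_flip_exp)

lemma comm_ring_hom_flip_L: "comm_ring_hom (flip_L T)"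
proof
  show "flip_L T 0 = 0" by (rule flip_L_0)
  show "flip_L T 1 = 1" using flip_L_single[of T 0 1] by (simp add: flip_exp_0)
qed (simp_all add: flip_L_add flip_L_mult)

lemma flip_L_const: "flip_L T (Poly_Mapping.single 0 c) = Poly_Mapping.single 0 c"
  by (simp add: flip_L_single flip_exp_0)

lemma flip_L_laurent_monom: "flip_L T (laurent_monom e) = laurent_monom (flip_exp T e)"
  by (simp add: laurent_monom_def flip_L_single)

lemma flip_L_cos_L: "flip_L T (cos_L j) = cos_L j"
proof -
  interpret comm_ring_hom "flip_L T" by (rule comm_ring_hom_flip_L)
  show ?thesis
    by (simp add: cos_L_def half_def hom_mult hom_add flip_L_const flip_L_laurent_monom flip_exp_single add.commute)
qed

lemma flip_L_cos_L_sum: "flip_L T (cos_L_sum n {}) = cos_L_sum n T"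
proof -
  interpret comm_ring_hom "flip_L T" by (rule comm_ring_hom_flip_L)
  show ?thesis
    by (simp add: cos_L_sum_def half_def hom_mult hom_add flip_L_const flip_L_laurent_monom
        flip_exp_uminus flip_exp_sign_exp)
qed

lemma lookup_cos_L_sum:
  "Poly_Mapping.lookup (cos_L_sum n T) e =
     1/2 * ((if sign_exp n T = e then 1 else 0) + (if - sign_exp n T = e then 1 else 0))"
  by (simp add: cos_L_sum_def half_def lookup_single_0_mult laurent_monom_def lookup_add lookup_single when_def)

lemma inj_on_cos_L_sum:
  assumes "n \<ge> 2"
  shows "inj_on (cos_L_sum n) (Pow {2..n-1})"
proof
  fix T T' assume T: "T \<in> Pow {2..n-1}" and T': "T' \<in> Pow {2..n-1}" and eq: "cos_L_sum n T = cos_L_sum n T'"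
  have lookup_sign_exp: "Poly_Mapping.lookup (sign_exp n S) j = (if j \<in> {1..n-1} then if j \<in> S then -1 else 1 else 0)"
    for S j unfolding sign_exp_def lookup_sum by (simp add: lookup_single when_def sum.delta)
  have ne: "- sign_exp n S \<noteq> sign_exp n S'" if "S \<in> Pow {2..n-1}" "S' \<in> Pow {2..n-1}" for S S'
  proof
    assume "- sign_exp n S = sign_exp n S'"
    then have "Poly_Mapping.lookup (- sign_exp n S) 1 = Poly_Mapping.lookup (sign_exp n S') 1" by simp
    moreover have "1 \<notin> S" "1 \<notin> S'" "1 \<le> n - 1" using that assms by auto
    ultimately show False by (simp add: lookup_sign_exp)
  qed
  have "Poly_Mapping.lookup (cos_L_sum n T') (sign_exp n T) = Poly_Mapping.lookup (cos_L_sum n T) (sign_exp n T)"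
    by (simp add: eq)
  then have e: "sign_exp n T' = sign_exp n T"
    using ne[OF T T] ne[OF T' T] by (auto simp: lookup_cos_L_sum split: if_splits)
  have "j \<in> T \<longleftrightarrow> j \<in> T'" if "j \<in> {1..n-1}" for j
    using e[THEN arg_cong[where f="\<lambda>e. Poly_Mapping.lookup e j"]] that
    by (simp add: lookup_sign_exp split: if_splits)
  then show "T = T'" using T T' by auto
qed

definition laurent_of_rat :: "rat \<Rightarrow> lpoly" where
  "laurent_of_rat c = Poly_Mapping.single 0 (of_rat c)"

lemma comm_ring_hom_laurent_of_rat: "comm_ring_hom laurent_of_rat"
  using comm_ring_hom_comp[OF comm_ring_hom_of_rat comm_ring_hom_single_0]
  unfolding laurent_of_rat_def[abs_def] comp_def .

definition x_to_laurent :: "nat \<Rightarrow> nat set \<Rightarrow> mpoly \<Rightarrow> lpoly" where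
  "x_to_laurent n T = insertion laurent_of_rat
     (\<lambda>k. if 1 \<le> k \<and> k \<le> n - 1 then cos_L k else if k = n then cos_L_sum n T else 0)"

definition xy_to_laurent :: "nat \<Rightarrow> mpoly \<Rightarrow> lpoly" where
  "xy_to_laurent n = insertion laurent_of_rat
     (\<lambda>k. if 1 \<le> k \<and> k \<le> n - 1 then cos_L k else if k = n then cos_L_sum n {}
          else if n < k \<and> k < 2 * n then sin_L (k - n) else 0)"

lemma comm_ring_hom_x_to_laurent: "comm_ring_hom (x_to_laurent n T)"
  unfolding x_to_laurent_def by (rule comm_ring_hom_insertion[OF comm_ring_hom_laurent_of_rat])

lemma comm_ring_hom_xy_to_laurent: "comm_ring_hom (xy_to_laurent n)"
  unfolding xy_to_laurent_def by (rule comm_ring_hom_insertion[OF comm_ring_hom_laurent_of_rat])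

lemma xy_to_laurent_X: "j \<in> {1..n-1} \<Longrightarrow> xy_to_laurent n (X j) = cos_L j"
  by (simp add: xy_to_laurent_def X_def comm_ring_hom_laurent_of_rat)

lemma xy_to_laurent_X_n: "n \<ge> 1 \<Longrightarrow> xy_to_laurent n (X n) = cos_L_sum n {}"
proof -
  assume "n \<ge> 1"
  then have "\<not> n \<le> n - 1" by arith
  then show ?thesis by (simp add: xy_to_laurent_def X_def comm_ring_hom_laurent_of_rat)
qed

lemma xy_to_laurent_Y: "j \<in> {1..n-1} \<Longrightarrow> xy_to_laurent n (Y n j) = sin_L j"
proof -
  assume "j \<in> {1..n-1}"
  then have "\<not> n + j \<le> n - 1" "n + j \<noteq> n" "n < n + j" "n + j < 2 * n" by auto
  then show ?thesis by (simp add: xy_to_laurent_def Y_def comm_ring_hom_laurent_of_rat)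
qed

lemma xy_to_laurent_circle_rel: "i \<in> {1..n-1} \<Longrightarrow> xy_to_laurent n (circle_rel n i) = 0"
proof -
  assume "i \<in> {1..n-1}"
  interpret comm_ring_hom "xy_to_laurent n" by (rule comm_ring_hom_xy_to_laurent)
  show ?thesis
    using \<open>i \<in> {1..n-1}\<close> by (simp add: circle_rel_def hom_distribs xy_to_laurent_X xy_to_laurent_Y sin_L_squared)
qed

lemma xy_to_laurent_P_lift:
  assumes "n \<ge> 2"
  shows "xy_to_laurent n (P_lift n) = 0"
proof -
  interpret comm_ring_hom "xy_to_laurent n" by (rule comm_ring_hom_xy_to_laurent)
  have "xy_to_laurent n (EC (sigma_y n {}) (n-1)) = cos_expansion sin_L cos_L (n-1)"
    unfolding EC_eq_cos_expansion hom_cos_expansion[OF comm_ring_hom_xy_to_laurent]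
    by (rule cos_expansion_cong) (simp_all add: sigma_y_def xy_to_laurent_X xy_to_laurent_Y)
  moreover have "xy_to_laurent n (X n) = cos_L_sum n {}"
    using assms by (intro xy_to_laurent_X_n) simp
  ultimately have "xy_to_laurent n (X n - EC (sigma_y n {}) (n-1)) = 0"
    unfolding hom_minus cos_expansion_sin_L_cos_L by simp
  then show ?thesis
    unfolding P_lift_def hom_prod by (intro prod_zero) auto
qed

lemma x_to_laurent_eq_xy_to_laurent: "in_Qx n q \<Longrightarrow> x_to_laurent n {} q = xy_to_laurent n q"
  unfolding x_to_laurent_def xy_to_laurent_def in_Qx_iff_vars_in
  by (erule insertion_cong_vars_in) simp

lemma x_to_laurent_eq_0:
  assumes "n \<ge> 2" "in_Qx n p" "cong_y n (P_lift n) p"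
  shows "x_to_laurent n {} p = 0"
  using hom_eq_if_cong_y[OF comm_ring_hom_xy_to_laurent xy_to_laurent_circle_rel assms(3)]
  by (simp add: x_to_laurent_eq_xy_to_laurent[OF assms(2)] xy_to_laurent_P_lift[OF assms(1)])

lemma flip_L_x_to_laurent: "flip_L T (x_to_laurent n {} q) = x_to_laurent n T q"
  unfolding x_to_laurent_def hom_insertion[OF comm_ring_hom_flip_L]
  by (intro arg_cong2[where f="\<lambda>a b. insertion a b q"])
     (auto simp: fun_eq_iff laurent_of_rat_def flip_L_const flip_L_cos_L flip_L_cos_L_sum flip_L_0)

lemma x_to_laurent_eq_poly:
  "x_to_laurent n T q = poly (map_poly (x_to_laurent n {}) (poly_in_var n q)) (cos_L_sum n T)"
  unfolding x_to_laurent_def poly_map_poly_in_var[OF comm_ring_hom_laurent_of_rat]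
  by (intro arg_cong2[where f="\<lambda>a b. insertion a b q"]) (auto simp: fun_eq_iff)

lemma card_le_degree_if_x_to_laurent_eq_0:
  assumes n: "n \<ge> 2" and a: "x_to_laurent n {} a = 0" and unit: "lead_coeff (poly_in_var n a) dvd 1"
  shows "card (Pow {2..n-1}) \<le> degree (poly_in_var n a)"
proof -
  interpret \<phi>: comm_ring_hom "x_to_laurent n {}" by (rule comm_ring_hom_x_to_laurent)
  let ?A = "map_poly (x_to_laurent n {}) (poly_in_var n a)"
  have "poly ?A (cos_L_sum n T) = 0" for T
  proof -
    have "poly ?A (cos_L_sum n T) = flip_L T (x_to_laurent n {} a)"
      by (simp only: flip_L_x_to_laurent x_to_laurent_eq_poly[symmetric])
    then show ?thesis by (simp add: a flip_L_0)
  qed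
  then have roots: "cos_L_sum n ` Pow {2..n-1} \<subseteq> {z. poly ?A z = 0}" by blast
  have "x_to_laurent n {} (lead_coeff (poly_in_var n a)) dvd 1"
    using unit by (rule \<phi>.hom_dvd_1)
  then have "coeff ?A (degree (poly_in_var n a)) \<noteq> 0"
    by (auto simp: coeff_map_poly)
  then have A: "?A \<noteq> 0" by (metis coeff_0)
  have "card (Pow {2..n-1}) = card (cos_L_sum n ` Pow {2..n-1})"
    using inj_on_cos_L_sum[OF n] by (simp add: card_image)
  also have "\<dots> \<le> card {z. poly ?A z = 0}"
    by (rule card_mono[OF poly_roots_finite[OF A] roots])
  also have "\<dots> \<le> degree ?A" by (rule card_poly_roots_bound[OF A])
  also have "\<dots> \<le> degree (poly_in_var n a)" by (rule degree_map_poly_le)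
  finally show ?thesis .
qed

section \<open>Monicity in \<open>x\<^sub>n\<close>\<close>

text \<open>Over \<open>\<complex>\<close> every point of the \<open>x\<close>-space lifts to a zero of the circle relations, so
  that evaluating \<open>p\<close> and \<open>P_lift n\<close> gives the same polynomial in \<open>x\<^sub>n\<close>, monic of degree
  \<open>2\<^sup>n\<^sup>-\<^sup>2\<close>; by the identity theorem this already holds for \<open>p\<close> itself.\<close>

definition circle_point :: "nat \<Rightarrow> (nat \<Rightarrow> complex) \<Rightarrow> nat \<Rightarrow> complex" where
  "circle_point n v k = (if n < k \<and> k < 2 * n then csqrt (1 - v (k - n) ^ 2) else v k)"

lemma eval_at_circle_point_circle_rel:
  assumes "i \<in> {1..n-1}"
  shows "eval_at ((circle_point n v)(n := t)) (circle_rel n i) = 0"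
proof -
  interpret comm_ring_hom "eval_at ((circle_point n v)(n := t))" by (rule comm_ring_hom_eval_at)
  have "n + i \<noteq> n" "i \<noteq> n" "n < n + i" "n + i < 2 * n" using assms by auto
  then show ?thesis
    by (simp add: circle_rel_def X_def Y_def hom_minus hom_power comm_ring_hom_of_rat circle_point_def)
qed

lemma map_poly_eval_at_poly_in_var:
  assumes "in_Qx n p" "cong_y n (P_lift n) p"
  shows "\<exists>c. map_poly (eval_at v) (poly_in_var n p) = (\<Prod>T\<in>Pow {2..n-1}. [:- c T, 1:])"
proof -
  let ?c = "\<lambda>T. eval_at (circle_point n v) (EC (sigma_y n T) (n-1))"
  have "poly (map_poly (eval_at v) (poly_in_var n p)) t = poly (\<Prod>T\<in>Pow {2..n-1}. [:- ?c T, 1:]) t" for t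
  proof -
    let ?u = "(circle_point n v)(n := t)"
    interpret comm_ring_hom "eval_at ?u" by (rule comm_ring_hom_eval_at)
    have "poly (map_poly (eval_at v) (poly_in_var n p)) t = eval_at (v(n := t)) p"
      by (rule poly_map_poly_in_var[OF comm_ring_hom_of_rat])
    also have "\<dots> = eval_at ?u p"
      using assms(1) unfolding in_Qx_iff_vars_in by (rule insertion_cong_vars_in) (simp add: circle_point_def)
    also have "\<dots> = eval_at ?u (P_lift n)"
      by (rule hom_eq_if_cong_y[OF comm_ring_hom_eval_at eval_at_circle_point_circle_rel assms(2), symmetric])
    also have "\<dots> = (\<Prod>T\<in>Pow {2..n-1}. t - ?c T)"
    proof -
      have "eval_at ?u (EC (sigma_y n T) (n-1)) = ?c T" for T
        by (rule insertion_cong_vars_in[OF vars_in_EC_sigma_y]) simp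
      then show ?thesis by (simp add: P_lift_def hom_prod hom_minus X_def comm_ring_hom_of_rat)
    qed
    also have "\<dots> = poly (\<Prod>T\<in>Pow {2..n-1}. [:- ?c T, 1:]) t"
      by (simp add: poly_prod)
    finally show ?thesis .
  qed
  then have "map_poly (eval_at v) (poly_in_var n p) = (\<Prod>T\<in>Pow {2..n-1}. [:- ?c T, 1:])"
    using poly_eq_poly_eq_iff by blast
  then show ?thesis by (rule exI[where x = ?c])
qed

lemma
  assumes "in_Qx n p" "cong_y n (P_lift n) p"
  shows degree_poly_in_var: "degree (poly_in_var n p) = card (Pow {2..n-1})"
    and lead_coeff_poly_in_var: "lead_coeff (poly_in_var n p) = 1"
proof -
  let ?N = "card (Pow {2..n-1})" and ?P = "poly_in_var n p"
  have coeff_eval: "eval_at v (coeff ?P k) = coeff (map_poly (eval_at v) ?P) k" for v k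
    by (simp add: coeff_map_poly)
  have monic: "degree (map_poly (eval_at v) ?P) = ?N \<and> lead_coeff (map_poly (eval_at v) ?P) = 1" for v
  proof -
    obtain c where c: "map_poly (eval_at v) ?P = (\<Prod>T\<in>Pow {2..n-1}. [:- c T, 1:])"
      using map_poly_eval_at_poly_in_var[OF assms] by blast
    have "degree (\<Prod>T\<in>Pow {2..n-1}. [:- c T, 1:]) = ?N" by (simp add: degree_prod_sum_eq)
    moreover have "lead_coeff (\<Prod>T\<in>Pow {2..n-1}. [:- c T, 1:]) = 1" by (simp add: lead_coeff_prod)
    ultimately show ?thesis unfolding c by blast
  qed
  have high: "coeff ?P k = 0" if "k > ?N" for k
  proof (rule eq_0_if_eval_at_eq_0)
    fix v
    have "degree (map_poly (eval_at v) ?P) < k" using monic[of v] that by simp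
    then show "eval_at v (coeff ?P k) = 0" unfolding coeff_eval by (rule coeff_eq_0)
  qed
  have top: "coeff ?P ?N = 1"
  proof -
    have "coeff ?P ?N - 1 = 0"
    proof (rule eq_0_if_eval_at_eq_0)
      fix v
      interpret comm_ring_hom "eval_at v" by (rule comm_ring_hom_eval_at)
      have "eval_at v (coeff ?P ?N) = 1" using monic[of v] unfolding coeff_eval by metis
      then show "eval_at v (coeff ?P ?N - 1) = 0" by (simp add: hom_minus)
    qed
    then show ?thesis by simp
  qed
  have "degree ?P \<le> ?N" by (rule degree_le) (use high in auto)
  moreover have "?N \<le> degree ?P" using top by (intro le_degree) simp
  ultimately show "degree ?P = ?N" by simp
  with top show "lead_coeff ?P = 1" by simp
qed

section \<open>Irreducibility\<close>

lemma dvd_1_if_degree_poly_in_var_eq_0: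
  assumes "degree (poly_in_var j c) = 0" "lead_coeff (poly_in_var j c) dvd 1"
  shows "c dvd 1"
proof -
  have "c = coeff (poly_in_var j c) 0"
    using poly_poly_in_var_var[of j c] degree_0_id[OF assms(1)] by (metis poly_const_conv)
  then show ?thesis using assms by simp
qed

lemma irreducible_if_vanishing_factors_have_full_degree:
  fixes \<phi> :: "mpoly \<Rightarrow> 'a::idom"
  assumes \<phi>: "comm_ring_hom \<phi>" and p: "\<phi> p = 0"
    and degree: "degree (poly_in_var j p) = N" "N \<noteq> 0" and monic: "lead_coeff (poly_in_var j p) = 1"
    and full: "\<And>a. \<phi> a = 0 \<Longrightarrow> lead_coeff (poly_in_var j a) dvd 1 \<Longrightarrow> N \<le> degree (poly_in_var j a)"
  shows "irreducible p"
proof (rule irreducibleI)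
  interpret \<phi>: comm_ring_hom \<phi> by fact
  interpret \<pi>: comm_ring_hom "poly_in_var j" by (rule comm_ring_hom_poly_in_var)
  show "p \<noteq> 0" using monic by auto
  show "\<not> p dvd 1"
  proof
    assume "p dvd 1"
    then have "poly_in_var j p dvd 1" by (rule \<pi>.hom_dvd_1)
    then show False using degree by (auto simp: is_unit_poly_iff)
  qed
  fix a b assume ab: "p = a * b"
  let ?A = "poly_in_var j a" and ?B = "poly_in_var j b"
  have AB: "?A * ?B = poly_in_var j p" using ab by (simp add: \<pi>.hom_mult)
  then have "?A \<noteq> 0" "?B \<noteq> 0" using monic by auto
  then have degree_sum: "degree ?A + degree ?B = N" using AB degree by (metis degree_mult_eq)
  have "lead_coeff ?A * lead_coeff ?B = 1" using AB monic by (metis lead_coeff_mult)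
  then have units: "lead_coeff ?A dvd 1" "lead_coeff ?B dvd 1" by (metis dvdI mult.commute)+
  have "\<phi> a = 0 \<or> \<phi> b = 0" using p ab by (simp add: \<phi>.hom_mult)
  then show "a dvd 1 \<or> b dvd 1"
  proof
    assume "\<phi> a = 0"
    then have "N \<le> degree ?A" using units(1) by (rule full)
    then have "degree ?B = 0" using degree_sum by simp
    then show ?thesis using units(2) dvd_1_if_degree_poly_in_var_eq_0 by blast
  next
    assume "\<phi> b = 0"
    then have "N \<le> degree ?B" using units(2) by (rule full)
    then have "degree ?A = 0" using degree_sum by simp
    then show ?thesis using units(1) dvd_1_if_degree_poly_in_var_eq_0 by blast
  qed
qed

theorem theorem3:
  fixes n :: nat
  assumes "n \<ge> 3"
  shows "\<exists>p :: mpoly. in_Qx n p \<and> cong_y n (P_lift n) p \<and> irreducible p"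
proof -
  have n: "n \<ge> 2" using assms by simp
  obtain p where p: "in_Qx n p" "cong_y n (P_lift n) p" using ex_in_Qx_cong_P_lift[OF n] by blast
  have "irreducible p"
  proof (rule irreducible_if_vanishing_factors_have_full_degree[OF comm_ring_hom_x_to_laurent])
    show "x_to_laurent n {} p = 0" by (rule x_to_laurent_eq_0[OF n p])
    show "degree (poly_in_var n p) = card (Pow {2..n-1})" by (rule degree_poly_in_var[OF p])
    show "lead_coeff (poly_in_var n p) = 1" by (rule lead_coeff_poly_in_var[OF p])
    show "card (Pow {2..n-1}) \<noteq> 0" by (simp add: card_Pow)
    show "card (Pow {2..n-1}) \<le> degree (poly_in_var n a)"
      if "x_to_laurent n {} a = 0" "lead_coeff (poly_in_var n a) dvd 1" for a
      using that by (rule card_le_degree_if_x_to_laurent_eq_0[OF n])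
  qed
  with p show ?thesis by blast
qed

end
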